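(* Let $V$ be a finite-dimensional real vector space and $\mathcal{S}=\{x_i\}_{1\le i\le n}$ a finite set of elements of $V$, labeled by integers $\{y_i\}_{1\le i\le n}\subset\{1,\dots,K\}$ with $K\le n$. For $k\in\{1,\dots,K\}$ let $C_k=\{x_i\in\mathcal{S}: y_i=k\}$, and let $S_k$ be a non-empty subset of $C_k$ with cardinality $|S_k|$. Let $W$ be a finite-dimensional real vector space with a fixed basis and $\mathcal{L}:V\to W$ a linear map. Let $A_{\mathcal{L}(S_k)}\in\mathbb{R}^{(1+\dim W)\times|S_k|}$ be the matrix whose columns are, for each element $s\in S_k$, the coordinate vector of $\mathcal{L}(s)$ with an additional entry $1$ appended at the bottom. If for every $x\in\mathcal{S}\setminus C_k$ the linear system $$A_{\mathcal{L}(S_k)}w=\begin{pmatrix}\mathcal{L}(x)\\1\end{pmatrix}$$ has no nonnegative solution $w\in\mathbb{R}_+^{|S_k|}$, then $S_k$ is pure in $\mathcal{S}$.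
   Context: The convex hull $\mathcal{E}(A)$ of a non-empty set $A\subset V$ is the smallest convex set containing $A$, equivalently the set of all convex combinations of finite subsets of $A$. Each $x_i\in\mathcal{S}$ carries the label $y_i$, written $\mathcal{K}(x_i)=y_i$. A non-empty subset $\mathcal{S}_{\mathcal{I}}\subset\mathcal{S}$ is called pure in $\mathcal{S}$ if $\mathcal{K}(\mathcal{S}\cap\mathcal{E}(\mathcal{S}_{\mathcal{I}}))$ is a singleton, i.e. all points of $\mathcal{S}$ lying in the convex hull of $\mathcal{S}_{\mathcal{I}}$ have the same label. *)

theory Defs
  imports "HOL-Analysis.Analysis"
begin

definition pure_in :: "('a::real_vector \<Rightarrow> nat) \<Rightarrow> 'a set \<Rightarrow> 'a set \<Rightarrow> bool" where
  "pure_in lab S A \<longleftrightarrow> A \<noteq> {} \<and> A \<subseteq> S \<and> (\<exists>c. lab ` (S \<inter> convex hull A) = {c})"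

text \<open>The augmented linear system  A_{L(Sk)} w = (L x ; 1), written row by row:
  the columns of A_{L(Sk)} are indexed by s in Sk and consist of the coordinates
  of L s with respect to the fixed basis (Basis) of W, followed by an entry 1.\<close>
definition aug_system :: "('a \<Rightarrow> 'b::euclidean_space) \<Rightarrow> 'a set \<Rightarrow> ('a \<Rightarrow> real) \<Rightarrow> 'a \<Rightarrow> bool" where
  "aug_system L Sk w x \<longleftrightarrow>
     (\<forall>b\<in>Basis. (\<Sum>s\<in>Sk. (L s \<bullet> b) * w s) = L x \<bullet> b) \<and> (\<Sum>s\<in>Sk. 1 * w s) = 1"

end

theory Submission
  imports Defs
begin

lemma aug_system_iff:
  "aug_system L Sk w x \<longleftrightarrow> (\<Sum>s\<in>Sk. w s *\<^sub>R L s) = L x \<and> sum w Sk = 1"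
proof -
  have "(\<forall>b\<in>Basis. (\<Sum>s\<in>Sk. (L s \<bullet> b) * w s) = L x \<bullet> b) \<longleftrightarrow> (\<Sum>s\<in>Sk. w s *\<^sub>R L s) = L x"
    by (simp add: euclidean_eq_iff[where x = "\<Sum>s\<in>Sk. w s *\<^sub>R L s"] inner_sum_left mult.commute)
  then show ?thesis by (simp add: aug_system_def)
qed

lemma aug_system_solvable_if_in_convex_hull:
  assumes "finite Sk" and "linear L" and "x \<in> convex hull Sk"
  shows "\<exists>w. (\<forall>s\<in>Sk. 0 \<le> w s) \<and> aug_system L Sk w x"
proof -
  obtain w where w: "\<forall>s\<in>Sk. 0 \<le> w s" "sum w Sk = 1" "(\<Sum>s\<in>Sk. w s *\<^sub>R s) = x"
    using assms(3) unfolding convex_hull_finite[OF assms(1)] by blast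
  have "L x = (\<Sum>s\<in>Sk. w s *\<^sub>R L s)"
    unfolding w(3)[symmetric] linear_sum[OF assms(2)] linear_scale[OF assms(2)] ..
  then show ?thesis
    using w(1,2) by (auto simp: aug_system_iff)
qed

lemma pure_in_if_constant_label:
  assumes "A \<noteq> {}" and "A \<subseteq> S"
    and "\<And>x. x \<in> S \<Longrightarrow> x \<in> convex hull A \<Longrightarrow> lab x = c"
  shows "pure_in lab S A"
proof -
  have "A \<subseteq> S \<inter> convex hull A"
    using assms(2) hull_subset[of A convex] by (rule Int_greatest)
  then have "S \<inter> convex hull A \<noteq> {}"
    using assms(1) by blast
  moreover have "lab ` (S \<inter> convex hull A) \<subseteq> {c}"
    using assms(3) by blast
  ultimately have "lab ` (S \<inter> convex hull A) = {c}"
    by blast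
  then show ?thesis
    using assms(1,2) unfolding pure_in_def by blast
qed

theorem corollary1:
  fixes S :: "'a::euclidean_space set"
    and lab :: "'a \<Rightarrow> nat"
    and K k :: nat
    and Sk :: "'a set"
    and L :: "'a \<Rightarrow> 'b::euclidean_space"
  assumes "finite S"
    and "\<forall>x\<in>S. lab x \<in> {1..K}"
    and "K \<le> card S"
    and "k \<in> {1..K}"
    and "Sk \<noteq> {}"
    and "Sk \<subseteq> {x\<in>S. lab x = k}"
    and "linear L"
    and "\<forall>x\<in>S - {x\<in>S. lab x = k}. \<not> (\<exists>w. (\<forall>s\<in>Sk. w s \<ge> 0) \<and> aug_system L Sk w x)"
  shows "pure_in lab S Sk"
proof -
  have "Sk \<subseteq> S"
    using assms(6) by auto
  then have "finite Sk"
    using assms(1) by (rule finite_subset)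
  have "lab x = k" if "x \<in> S" and "x \<in> convex hull Sk" for x
    using aug_system_solvable_if_in_convex_hull[OF \<open>finite Sk\<close> assms(7) that(2)] assms(8) that(1)
    by blast
  with assms(5) \<open>Sk \<subseteq> S\<close> show ?thesis
    by (rule pure_in_if_constant_label)
qed

end
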